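(* Let $A:[0,T]\to\mathbb{C}^{m\times m}$ be continuous, $\|\cdot\|$ a submultiplicative matrix norm, and let $F_n,A_n$ be the Fer sequence: $A_0=A$, $F_{n+1}(t)=\int_0^tA_n(s)ds$, $A_{n+1}=e^{-F_{n+1}}A_ne^{F_{n+1}}-\int_0^1e^{-xF_{n+1}}A_ne^{xF_{n+1}}dx$. Let $M(K)=\int_0^K\frac{1-e^{2x}(1-2x)}{2x}dx$ and let $\xi\approx0.8604065$ be the smallest positive fixed point of $M$. Then for all $n\ge0$ and $t\in[0,T]$, $\int_0^t\|A_n(s)\|ds\le M^{n}\big(\int_0^t\|A(s)\|ds\big)$ (with $M^n$ the $n$-fold iterate), hence $\|F_{n+1}(t)\|\le M^n\big(\int_0^t\|A(s)\|ds\big)$; and if $\int_0^t\|A(s)\|ds<\xi$, then $M^n\big(\int_0^t\|A(s)\|ds\big)\to0$, so $F_n(t)\to0$ as $n\to\infty$ (the Fer expansion converges). *)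

theory Defs
  imports "HOL-Analysis.Analysis"
begin

text \<open>Complex m x m matrices are modelled as complex^'m^'m (with the standard
 Euclidean topology; all norms on this finite-dimensional space are equivalent).\<close>

type_synonym 'm cmat = "complex ^ 'm ^ 'm"

primrec mat_pow :: "'m::finite cmat \<Rightarrow> nat \<Rightarrow> 'm cmat" where
  "mat_pow X 0 = mat 1"
| "mat_pow X (Suc k) = X ** mat_pow X k"

definition mexp :: "'m::finite cmat \<Rightarrow> 'm cmat" where
  "mexp X = (\<Sum>k. (1 / fact k) *\<^sub>R mat_pow X k)"

definition mscale :: "complex \<Rightarrow> 'm::finite cmat \<Rightarrow> 'm cmat" where
  "mscale c X = (\<chi> i j. c * X $ i $ j)"

definition submult_matrix_norm :: "('m::finite cmat \<Rightarrow> real) \<Rightarrow> bool" where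
  "submult_matrix_norm N \<longleftrightarrow>
     (\<forall>X. N X = 0 \<longleftrightarrow> X = 0) \<and>
     (\<forall>X. 0 \<le> N X) \<and>
     (\<forall>X Y. N (X + Y) \<le> N X + N Y) \<and>
     (\<forall>c X. N (mscale c X) = cmod c * N X) \<and>
     (\<forall>X Y. N (X ** Y) \<le> N X * N Y)"

text \<open>The Fer sequence: fer_A A n = A_n, fer_F A n = F_n (F_0 := 0, unused in the paper).\<close>
primrec fer_A :: "(real \<Rightarrow> 'm::finite cmat) \<Rightarrow> nat \<Rightarrow> real \<Rightarrow> 'm cmat" where
  "fer_A A 0 = A"
| "fer_A A (Suc n) = (\<lambda>t. let F = integral {0..t} (fer_A A n) in
      mexp (- F) ** fer_A A n t ** mexp F
      - integral {0..1} (\<lambda>x. mexp (- (x *\<^sub>R F)) ** fer_A A n t ** mexp (x *\<^sub>R F)))"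

fun fer_F :: "(real \<Rightarrow> 'm::finite cmat) \<Rightarrow> nat \<Rightarrow> real \<Rightarrow> 'm cmat" where
  "fer_F A 0 = (\<lambda>t. 0)"
| "fer_F A (Suc n) = (\<lambda>t. integral {0..t} (fer_A A n))"

definition fer_M :: "real \<Rightarrow> real" where
  "fer_M K = integral {0..K} (\<lambda>x. (1 - exp (2 * x) * (1 - 2 * x)) / (2 * x))"

definition fer_xi :: real where
  "fer_xi = Inf {K. 0 < K \<and> fer_M K = K}"

end

theory Submission
  imports Defs
begin

text \<open>
  Let psi(x) = exp(-xF) Y exp(xF) be the conjugation flow. One Fer step maps Y = A_n(t)
  to psi(1) - int_0^1 psi, where F = F_(n+1)(t). Since psi' = psi F - F psi, Gronwall's
  inequality gives N(psi(x)) <= N(Y) exp(2Kx) whenever N(F) <= K, and integration by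
  parts, psi(1) - int_0^1 psi = int_0^1 x psi'(x) dx, bounds the result by N(Y) M'(K).
  With K = int_0^t N(A_n) >= N(F_(n+1)(t)), integrating in t and substituting turns this
  into int_0^t N(A_(n+1)) <= M(int_0^t N(A_n)); induction and monotonicity of M give the
  iterate bounds. Below the least positive fixed point xi of M we have M(K) < K, so the
  iterates decrease to 0, and so does F_n(t) because all norms are equivalent.
\<close>

text \<open>A norm on a Euclidean space, given abstractly by its axioms (nonnegativity follows).
  Everything in this locale holds for arbitrary norms; it is applied to the matrix norm.\<close>
locale vector_norm =
  fixes N :: "'a::euclidean_space \<Rightarrow> real"
  assumes zero_iff: "N x = 0 \<longleftrightarrow> x = 0"
    and triangle: "N (x + y) \<le> N x + N y"
    and homogeneous: "N (r *\<^sub>R x) = \<bar>r\<bar> * N x"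
begin

lemma zero [simp]: "N 0 = 0"
  using zero_iff by simp

lemma uminus: "N (- x) = N x"
  by (metis homogeneous abs_minus_cancel abs_one mult_1 scaleR_minus1_left)

lemma nonneg: "0 \<le> N x"
  using triangle[of x "- x"] by (simp add: uminus)

lemma triangle_diff: "N (x - y) \<le> N x + N y"
  using triangle[of x "- y"] by (simp add: uminus)

lemma sum_le: "N (sum f S) \<le> (\<Sum>i\<in>S. N (f i))"
proof (induction S rule: infinite_finite_induct)
  case (insert i S)
  thus ?case using triangle[of "f i" "sum f S"] by simp
qed simp_all

text \<open>Expanding in the standard basis bounds N by a multiple of the Euclidean norm.\<close>
lemma le_norm: "N x \<le> (\<Sum>b\<in>Basis. N b) * norm x"
proof -
  have "N x = N (\<Sum>b\<in>Basis. (x \<bullet> b) *\<^sub>R b)" by (simp add: euclidean_representation)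
  also have "\<dots> \<le> (\<Sum>b\<in>Basis. N ((x \<bullet> b) *\<^sub>R b))" by (rule sum_le)
  also have "\<dots> \<le> (\<Sum>b\<in>Basis. norm x * N b)"
    by (intro sum_mono) (auto simp: homogeneous intro!: mult_right_mono Basis_le_norm nonneg)
  finally show ?thesis by (simp add: sum_distrib_left mult.commute)
qed

lemma continuous_on_N: "continuous_on S N"
proof (rule lipschitz_on_continuous_on)
  show "(\<Sum>b\<in>Basis. N b)-lipschitz_on S N"
  proof (rule lipschitz_onI)
    fix x y
    have "N x \<le> N y + N (x - y)" "N y \<le> N x + N (x - y)"
      using triangle[of y "x - y"] triangle[of x "y - x"] uminus[of "x - y"] by simp_all
    thus "dist (N x) (N y) \<le> (\<Sum>b\<in>Basis. N b) * dist x y"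
      using le_norm[of "x - y"] by (simp add: dist_real_def dist_norm)
  qed (simp add: sum_nonneg nonneg)
qed

lemma continuous_on_N_compose [continuous_intros]:
  "continuous_on S f \<Longrightarrow> continuous_on S (\<lambda>s. N (f s))"
  by (rule continuous_on_compose2[OF continuous_on_N _ subset_UNIV])

lemma dominates_norm: "\<exists>c>0. \<forall>x. c * norm x \<le> N x"
proof -
  have "sphere (0::'a) 1 \<noteq> {}"
    using vector_choose_size[of 1] by (auto simp: sphere_def dist_norm)
  then obtain x0 where x0: "x0 \<in> sphere 0 1" "\<And>y. y \<in> sphere 0 1 \<Longrightarrow> N x0 \<le> N y"
    using continuous_attains_inf[OF compact_sphere _ continuous_on_N] by blast
  have "N x0 > 0" using x0(1) nonneg[of x0] zero_iff[of x0] by auto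
  moreover have "N x0 * norm x \<le> N x" for x
  proof (cases "x = 0")
    case False
    hence "N x0 \<le> N ((1 / norm x) *\<^sub>R x)" by (intro x0(2)) (simp add: sphere_def dist_norm)
    thus ?thesis using False by (simp add: homogeneous field_simps)
  qed simp
  ultimately show ?thesis by blast
qed

lemma supporting_functional:
  assumes r: "0 < r" "r < N z"
  shows "\<exists>l. r < l \<bullet> z \<and> (\<forall>y. l \<bullet> y \<le> N y)"
proof -
  define C where "C = {y. N y \<le> r}"
  have "convex C"
    unfolding C_def convex_def
  proof (intro allI impI ballI, clarsimp)
    fix x y :: 'a and u v :: real
    assume "N x \<le> r" "N y \<le> r" "0 \<le> u" "0 \<le> v" "u + v = 1"
    have "N (u *\<^sub>R x + v *\<^sub>R y) \<le> u * N x + v * N y"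
      using triangle[of "u *\<^sub>R x" "v *\<^sub>R y"] \<open>0 \<le> u\<close> \<open>0 \<le> v\<close> by (simp add: homogeneous)
    also have "\<dots> \<le> u * r + v * r"
      using \<open>N x \<le> r\<close> \<open>N y \<le> r\<close> \<open>0 \<le> u\<close> \<open>0 \<le> v\<close> by (intro add_mono mult_left_mono) auto
    finally show "N (u *\<^sub>R x + v *\<^sub>R y) \<le> r" using \<open>u + v = 1\<close> by (simp add: distrib_right[symmetric])
  qed
  moreover have "closed C" unfolding C_def by (rule closed_Collect_le[OF continuous_on_N continuous_on_const])
  moreover have "z \<notin> C" using r by (simp add: C_def)
  ultimately have "\<exists>a b. a \<bullet> z < b \<and> (\<forall>y\<in>C. b < a \<bullet> y)"
    by (rule separating_hyperplane_closed_point)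
  then obtain a b where ab: "a \<bullet> z < b" "\<And>y. y \<in> C \<Longrightarrow> b < a \<bullet> y"
    by blast
  have b: "b < 0" using ab(2)[of 0] r by (simp add: C_def zero_iff)
  define l where "l = (r / b) *\<^sub>R a"
  have "l \<bullet> y \<le> N y" for y
  proof (cases "y = 0")
    case False
    hence Ny: "N y > 0" using nonneg[of y] zero_iff[of y] by linarith
    have "(r / N y) *\<^sub>R y \<in> C" using Ny r by (simp add: C_def homogeneous)
    hence "b < a \<bullet> ((r / N y) *\<^sub>R y)" by (rule ab(2))
    hence "b < (r / N y) * (a \<bullet> y)" by simp
    hence "b * N y < r * (a \<bullet> y)" using Ny by (simp add: field_simps)
    thus ?thesis using b r by (simp add: l_def field_simps)
  qed simp
  moreover have "r < l \<bullet> z" using ab(1) b r by (simp add: l_def field_simps)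
  ultimately show ?thesis by blast
qed

lemma integral_norm_le:
  fixes f :: "'n::euclidean_space \<Rightarrow> 'a"
  assumes f: "f integrable_on S" and Nf: "(\<lambda>x. N (f x)) integrable_on S"
  shows "N (integral S f) \<le> integral S (\<lambda>x. N (f x))"
proof (rule ccontr)
  define r where "r = (integral S (\<lambda>x. N (f x)) + N (integral S f)) / 2"
  assume "\<not> ?thesis"
  moreover have "0 \<le> integral S (\<lambda>x. N (f x))" by (rule integral_nonneg[OF Nf nonneg])
  ultimately have r: "0 < r" "r < N (integral S f)" "integral S (\<lambda>x. N (f x)) < r"
    by (auto simp: r_def)
  then obtain l where l: "r < l \<bullet> integral S f" "\<And>y. l \<bullet> y \<le> N y"
    using supporting_functional by blast
  have "l \<bullet> integral S f = integral S (\<lambda>x. l \<bullet> f x)"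
    using integral_linear[OF f bounded_linear_inner_right[of l]] by (simp add: o_def)
  also have "\<dots> \<le> integral S (\<lambda>x. N (f x))"
    using integrable_linear[OF f bounded_linear_inner_right[of l]]
    by (intro Henstock_Kurzweil_Integration.integral_le Nf l(2)) (simp add: o_def)
  finally show False using l(1) r(3) by simp
qed

lemma integral_norm_le_continuous:
  fixes f :: "real \<Rightarrow> 'a"
  assumes "continuous_on {a..b} f"
  shows "N (integral {a..b} f) \<le> integral {a..b} (\<lambda>x. N (f x))"
  using assms by (intro integral_norm_le integrable_continuous_interval continuous_on_N_compose)

end

lemma matrix_add_rdistrib: "(B + C) ** A = B ** A + C ** A"
  for A :: "'a::semiring_1 ^ 'p ^ 'n"
  by (vector matrix_matrix_mult_def sum.distrib[symmetric] field_simps)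

lemma bounded_bilinear_matrix_mult:
  "bounded_bilinear ((**) :: complex ^ 'n ^ 'm \<Rightarrow> complex ^ 'p ^ 'n \<Rightarrow> complex ^ 'p ^ 'm)"
proof -
  have "bilinear ((**) :: complex ^ 'n ^ 'm \<Rightarrow> complex ^ 'p ^ 'n \<Rightarrow> complex ^ 'p ^ 'm)"
    unfolding bilinear_def
    by (auto intro!: linearI simp: matrix_add_ldistrib matrix_add_rdistrib matrix_scalar_ac
        scalar_matrix_assoc)
  thus ?thesis by (simp add: bilinear_conv_bounded_bilinear)
qed

lemma continuous_on_matrix_mult [continuous_intros]:
  fixes f :: "'a::topological_space \<Rightarrow> complex ^ 'n ^ 'm" and g :: "'a \<Rightarrow> complex ^ 'p ^ 'n"
  shows "continuous_on S f \<Longrightarrow> continuous_on S g \<Longrightarrow> continuous_on S (\<lambda>x. f x ** g x)"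
  by (rule bounded_bilinear.continuous_on[OF bounded_bilinear_matrix_mult])

text \<open>The complex \<open>m \<times> m\<close> matrices with matrix multiplication, as a type of its own: the
  vector type carries the componentwise product, but the library's exponential and its
  derivative live in Banach algebras.\<close>
typedef (overloaded) 'm malg = "UNIV :: 'm::finite cmat set"
  morphisms to_mat of_mat by auto

setup_lifting type_definition_malg

instantiation malg :: (finite) real_vector
begin
lift_definition zero_malg :: "'a malg" is 0 .
lift_definition plus_malg :: "'a malg \<Rightarrow> 'a malg \<Rightarrow> 'a malg" is "(+)" .
lift_definition minus_malg :: "'a malg \<Rightarrow> 'a malg \<Rightarrow> 'a malg" is "(-)" .
lift_definition uminus_malg :: "'a malg \<Rightarrow> 'a malg" is uminus .
lift_definition scaleR_malg :: "real \<Rightarrow> 'a malg \<Rightarrow> 'a malg" is scaleR .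
instance by standard (transfer; simp add: algebra_simps scaleR_add_right scaleR_add_left)+
end

instantiation malg :: (finite) ring_1
begin
lift_definition one_malg :: "'a malg" is "mat 1" .
lift_definition times_malg :: "'a malg \<Rightarrow> 'a malg \<Rightarrow> 'a malg" is "(**)" .
instance
proof
  fix a b c :: "'a malg"
  show "a * b * c = a * (b * c)" by transfer (simp add: matrix_mul_assoc)
  show "1 * a = a" by transfer simp
  show "a * 1 = a" by transfer simp
  show "(a + b) * c = a * c + b * c" by transfer (simp add: matrix_add_rdistrib)
  show "a * (b + c) = a * b + a * c" by transfer (simp add: matrix_add_ldistrib)
  obtain i :: 'a where True by blast
  have "(0::'a cmat) $ i $ i \<noteq> mat 1 $ i $ i" by (simp add: mat_def)
  thus "(0::'a malg) \<noteq> 1" by transfer auto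
qed
end

instantiation malg :: (finite) real_normed_algebra_1
begin
definition norm_malg :: "'a malg \<Rightarrow> real"
  where "norm_malg x = onorm (\<lambda>Y::'a cmat. to_mat x ** Y)"
definition sgn_malg :: "'a malg \<Rightarrow> 'a malg"
  where "sgn_malg x = x /\<^sub>R norm x"
definition dist_malg :: "'a malg \<Rightarrow> 'a malg \<Rightarrow> real"
  where "dist_malg x y = norm (x - y)"
definition uniformity_malg :: "('a malg \<times> 'a malg) filter"
  where "uniformity_malg = (INF e\<in>{0<..}. principal {(x, y). dist x y < e})"
definition open_malg :: "'a malg set \<Rightarrow> bool"
  where "open_malg U = (\<forall>x\<in>U. \<forall>\<^sub>F (x', y) in uniformity. x' = x \<longrightarrow> y \<in> U)"
instance
proof
  note lin = bounded_bilinear.bounded_linear_right[OF bounded_bilinear_matrix_mult]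
  fix x y :: "'a malg" and a :: real and U :: "'a malg set"
  show "dist x y = norm (x - y)" by (simp add: dist_malg_def)
  show "sgn x = x /\<^sub>R norm x" by (simp add: sgn_malg_def)
  show "(uniformity :: ('a malg \<times> 'a malg) filter) = (INF e\<in>{0<..}. principal {(x, y). dist x y < e})"
    by (simp add: uniformity_malg_def)
  show "open U = (\<forall>x\<in>U. \<forall>\<^sub>F (x', y) in uniformity. x' = x \<longrightarrow> y \<in> U)"
    by (simp add: open_malg_def)
  have "norm x = 0 \<longleftrightarrow> (\<forall>Y::'a cmat. to_mat x ** Y = 0)"
    unfolding norm_malg_def by (rule onorm_eq_0[OF lin])
  also have "\<dots> \<longleftrightarrow> x = 0"
    by (metis matrix_mul_rid times0_left to_mat_inverse zero_malg.rep_eq)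
  finally show "norm x = 0 \<longleftrightarrow> x = 0" .
  show "norm (x + y) \<le> norm x + norm y"
    unfolding norm_malg_def plus_malg.rep_eq matrix_add_rdistrib by (rule onorm_triangle[OF lin lin])
  show "norm (a *\<^sub>R x) = \<bar>a\<bar> * norm x"
    unfolding norm_malg_def scaleR_malg.rep_eq scalar_matrix_assoc[symmetric]
    by (rule onorm_scaleR[OF lin])
  show "a *\<^sub>R x * y = a *\<^sub>R (x * y)" by transfer (simp add: scalar_matrix_assoc)
  show "x * a *\<^sub>R y = a *\<^sub>R (x * y)" by transfer (simp add: matrix_scalar_ac scalar_matrix_assoc)
  have "(\<lambda>Y::'a cmat. to_mat (x * y) ** Y) = (\<lambda>Y. to_mat x ** Y) \<circ> (\<lambda>Y. to_mat y ** Y)"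
    by (auto simp: times_malg.rep_eq matrix_mul_assoc)
  thus "norm (x * y) \<le> norm x * norm y"
    unfolding norm_malg_def using onorm_compose[OF lin lin] by metis
  show "norm (1::'a malg) = 1"
    unfolding norm_malg_def one_malg.rep_eq matrix_mul_lid by (rule onorm_id)
qed
end

text \<open>Both coercions are bounded linear, so the operator norm induces the Euclidean
  topology on matrices and the algebra is complete.\<close>
lemma bounded_linear_to_mat: "bounded_linear (to_mat :: 'm::finite malg \<Rightarrow> 'm cmat)"
proof (rule bounded_linear_intro[where K = "norm (mat 1 :: 'm cmat)"])
  fix x y :: "'m malg" and r :: real
  show "to_mat (x + y) = to_mat x + to_mat y" by (rule plus_malg.rep_eq)
  show "to_mat (r *\<^sub>R x) = r *\<^sub>R to_mat x" by (rule scaleR_malg.rep_eq)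
  have "norm (to_mat x ** (mat 1 :: 'm cmat)) \<le> onorm (\<lambda>Y::'m cmat. to_mat x ** Y) * norm (mat 1 :: 'm cmat)"
    by (rule onorm[OF bounded_bilinear.bounded_linear_right[OF bounded_bilinear_matrix_mult]])
  thus "norm (to_mat x) \<le> norm x * norm (mat 1 :: 'm cmat)" by (simp add: norm_malg_def)
qed

lemma bounded_linear_of_mat: "bounded_linear (of_mat :: 'm::finite cmat \<Rightarrow> 'm malg)"
proof -
  obtain K where K: "\<And>(a :: 'm cmat) (b :: 'm cmat). norm (a ** b) \<le> norm a * norm b * K"
    using bounded_bilinear.bounded[OF bounded_bilinear_matrix_mult] by blast
  have bound: "norm x \<le> K * norm (to_mat x)" for x :: "'m malg"
    unfolding norm_malg_def
  proof (rule onorm_le)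
    show "norm (to_mat x ** Y) \<le> K * norm (to_mat x) * norm Y" for Y :: "'m cmat"
      using K[of "to_mat x" Y] by (simp add: ac_simps)
  qed
  show ?thesis
  proof (rule bounded_linear_intro[where K = K])
    fix X Y :: "'m cmat" and r :: real
    show "of_mat (X + Y) = of_mat X + of_mat Y" by (simp add: plus_malg.abs_eq eq_onp_def)
    show "of_mat (r *\<^sub>R X) = r *\<^sub>R of_mat X" by (simp add: scaleR_malg.abs_eq eq_onp_def)
    show "norm (of_mat X) \<le> norm X * K"
      using bound[of "of_mat X"] by (simp add: of_mat_inverse mult.commute)
  qed
qed

instance malg :: (finite) banach
proof
  fix X :: "nat \<Rightarrow> 'a malg"
  assume "Cauchy X"
  hence "Cauchy (\<lambda>n. to_mat (X n))" by (rule bounded_linear.Cauchy[OF bounded_linear_to_mat])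
  then obtain L where "(\<lambda>n. to_mat (X n)) \<longlonglongrightarrow> L" using Cauchy_convergent_iff convergent_def by blast
  hence "(\<lambda>n. of_mat (to_mat (X n))) \<longlonglongrightarrow> of_mat L"
    by (rule bounded_linear.tendsto[OF bounded_linear_of_mat])
  thus "convergent X" by (auto simp: to_mat_inverse convergent_def)
qed

text \<open>Continuity of the exponential in an arbitrary Banach algebra (the library only provides
  it for fields): on every ball the exponential series converges uniformly.\<close>
lemma isCont_exp_algebra: "isCont (exp :: 'a::{real_normed_algebra_1,banach} \<Rightarrow> 'a) x"
proof -
  define R where "R = norm x + 1"
  have ul: "uniform_limit (ball 0 R) (\<lambda>n (y::'a). \<Sum>i<n. y ^ i /\<^sub>R fact i)
      (\<lambda>y. \<Sum>i. y ^ i /\<^sub>R fact i) sequentially"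
  proof (rule Weierstrass_m_test[where f = "\<lambda>i y. y ^ i /\<^sub>R fact i" and M = "\<lambda>i. R ^ i / fact i"])
    show "summable (\<lambda>i. R ^ i / fact i)"
      using summable_exp_generic[of R] by (simp add: divide_inverse_commute)
    fix n and y :: 'a assume "y \<in> ball 0 R"
    hence "norm y \<le> R" by auto
    have "norm (y ^ n /\<^sub>R fact n) = norm (y ^ n) / fact n"
      by (simp add: divide_inverse_commute)
    also have "\<dots> \<le> norm y ^ n / fact n"
      by (intro divide_right_mono norm_power_ineq) auto
    also have "\<dots> \<le> R ^ n / fact n"
      by (intro divide_right_mono power_mono) (auto simp: \<open>norm y \<le> R\<close>)
    finally show "norm (y ^ n /\<^sub>R fact n) \<le> R ^ n / fact n" .
  qed
  have "continuous_on (ball 0 R) (\<lambda>y::'a. \<Sum>i. y ^ i /\<^sub>R fact i)"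
    by (rule uniform_limit_theorem[OF _ ul]) (auto intro!: always_eventually continuous_intros)
  hence "continuous_on (ball 0 R) (exp :: 'a \<Rightarrow> 'a)" by (simp add: exp_def)
  moreover have "x \<in> ball 0 R" by (simp add: R_def)
  ultimately show ?thesis using continuous_on_eq_continuous_at open_ball by blast
qed

lemma to_mat_power: "to_mat (of_mat X ^ k) = mat_pow X k"
  by (induction k) (simp_all add: one_malg.rep_eq times_malg.rep_eq of_mat_inverse)

lemma mexp_eq_exp: "mexp X = to_mat (exp (of_mat X))"
proof -
  have "to_mat (exp (of_mat X)) = (\<Sum>n. to_mat (of_mat X ^ n /\<^sub>R fact n))"
    unfolding exp_def by (rule bounded_linear.suminf[OF bounded_linear_to_mat summable_exp_generic])
  thus ?thesis by (simp add: mexp_def scaleR_malg.rep_eq to_mat_power inverse_eq_divide)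
qed

lemma mexp_zero: "mexp 0 = mat 1"
  by (simp add: mexp_eq_exp zero_malg_def[symmetric] one_malg.rep_eq)

lemma continuous_on_mexp [continuous_intros]:
  assumes "continuous_on S f"
  shows "continuous_on S (\<lambda>x. mexp (f x))"
proof -
  have "continuous_on S (\<lambda>x. of_mat (f x))"
    by (rule continuous_on_compose2[OF linear_continuous_on[OF bounded_linear_of_mat] assms subset_UNIV])
  hence "continuous_on S (\<lambda>x. exp (of_mat (f x)))"
    by (rule continuous_on_compose2[OF continuous_at_imp_continuous_on[OF ballI[OF isCont_exp_algebra]]
          _ subset_UNIV])
  thus ?thesis
    unfolding mexp_eq_exp
    by (rule continuous_on_compose2[OF linear_continuous_on[OF bounded_linear_to_mat] _ subset_UNIV])
qed

lemma conjugation_has_vector_derivative: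
  fixes a b :: "'a::{real_normed_algebra_1,banach}"
  shows "((\<lambda>x. exp (x *\<^sub>R (-a)) * b * exp (x *\<^sub>R a)) has_vector_derivative
     exp (x *\<^sub>R (-a)) * b * exp (x *\<^sub>R a) * a - a * (exp (x *\<^sub>R (-a)) * b * exp (x *\<^sub>R a)))
     (at x within S)"
proof -
  have "((\<lambda>x. exp (x *\<^sub>R (-a)) * b * exp (x *\<^sub>R a)) has_vector_derivative
     exp (x *\<^sub>R (-a)) * b * (exp (x *\<^sub>R a) * a) + exp (x *\<^sub>R (-a)) * (-a) * b * exp (x *\<^sub>R a))
     (at x within S)"
    by (intro has_vector_derivative_mult has_vector_derivative_mult_left
        exp_scaleR_has_vector_derivative_right)
  moreover have "exp (x *\<^sub>R (-a)) * (-a) = (-a) * exp (x *\<^sub>R (-a))"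
    by (rule exp_times_scaleR_commute)
  hence "exp (x *\<^sub>R (-a)) * b * (exp (x *\<^sub>R a) * a) + exp (x *\<^sub>R (-a)) * (-a) * b * exp (x *\<^sub>R a)
     = exp (x *\<^sub>R (-a)) * b * exp (x *\<^sub>R a) * a - a * (exp (x *\<^sub>R (-a)) * b * exp (x *\<^sub>R a))"
    by (simp add: algebra_simps)
  ultimately show ?thesis by simp
qed

definition conj_flow :: "'m::finite cmat \<Rightarrow> 'm cmat \<Rightarrow> real \<Rightarrow> 'm cmat" where
  "conj_flow F Y x = mexp (- (x *\<^sub>R F)) ** Y ** mexp (x *\<^sub>R F)"

lemma conj_flow_0 [simp]: "conj_flow F Y 0 = Y"
  by (simp add: conj_flow_def mexp_zero)

lemma conj_flow_has_vector_derivative: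
  "(conj_flow F Y has_vector_derivative conj_flow F Y x ** F - F ** conj_flow F Y x) (at x within S)"
proof -
  have flow: "conj_flow F Y x = to_mat (exp (x *\<^sub>R (- of_mat F)) * of_mat Y * exp (x *\<^sub>R of_mat F))" for x
    by (simp add: conj_flow_def mexp_eq_exp times_malg.rep_eq of_mat_inverse
        uminus_malg.abs_eq scaleR_malg.abs_eq eq_onp_def)
  show ?thesis
    unfolding flow[abs_def] flow
    using bounded_linear.has_vector_derivative[OF bounded_linear_to_mat
        conjugation_has_vector_derivative[of "of_mat F" "of_mat Y" x S]]
    by (simp add: times_malg.rep_eq minus_malg.rep_eq of_mat_inverse)
qed

lemma continuous_on_conj_flow [continuous_intros]:
  "continuous_on S F \<Longrightarrow> continuous_on S Y \<Longrightarrow> continuous_on S x \<Longrightarrow>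
   continuous_on S (\<lambda>p. conj_flow (F p) (Y p) (x p))"
  unfolding conj_flow_def by (intro continuous_intros)

lemma continuous_on_conj_flow_time: "continuous_on S (conj_flow F Y)"
  using continuous_on_conj_flow[OF continuous_on_const continuous_on_const continuous_on_id] by simp

lemma gronwall:
  fixes u :: "real \<Rightarrow> real"
  assumes x: "0 \<le> x" and cont: "continuous_on {0..x} u" and L: "0 \<le> L"
    and hyp: "\<And>s. s \<in> {0..x} \<Longrightarrow> u s \<le> c + L * integral {0..s} u"
  shows "u x \<le> c * exp (L * x)"
proof -
  define w where "w = (\<lambda>s. integral {0..s} u)"
  define \<phi> where "\<phi> = (\<lambda>s. exp (- (L * s)) * (c + L * w s))"
  define \<phi>' where "\<phi>' = (\<lambda>s. exp (- (L * s)) * L * (u s - c - L * w s))"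
  have "(\<phi>' has_integral (\<phi> x - \<phi> 0)) {0..x}"
  proof (rule fundamental_theorem_of_calculus[OF x])
    fix s assume s: "s \<in> {0..x}"
    have "(w has_real_derivative u s) (at s within {0..x})"
      unfolding w_def has_real_derivative_iff_has_vector_derivative
      by (rule integral_has_vector_derivative[OF cont s])
    hence "(\<phi> has_real_derivative \<phi>' s) (at s within {0..x})"
      unfolding \<phi>_def \<phi>'_def by (auto intro!: derivative_eq_intros simp: algebra_simps)
    thus "(\<phi> has_vector_derivative \<phi>' s) (at s within {0..x})"
      by (simp add: has_real_derivative_iff_has_vector_derivative)
  qed
  moreover have "((\<lambda>s. 0) has_integral 0) {0..x}" by simp
  moreover have "\<phi>' s \<le> 0" if "s \<in> {0..x}" for s
    using hyp[OF that] L by (simp add: \<phi>'_def w_def mult_nonneg_nonpos)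
  ultimately have "\<phi> x - \<phi> 0 \<le> 0" by (rule has_integral_le)
  hence "exp (- (L * x)) * (c + L * w x) \<le> c" by (simp add: \<phi>_def w_def)
  hence "c + L * w x \<le> c * exp (L * x)" by (simp add: exp_minus field_simps)
  moreover have "u x \<le> c + L * w x" using hyp[of x] x by (simp add: w_def)
  ultimately show ?thesis by simp
qed

lemma has_integral_weighted_derivative:
  fixes f f' :: "real \<Rightarrow> 'a::banach"
  assumes deriv: "\<And>x. x \<in> {0..1} \<Longrightarrow> (f has_vector_derivative f' x) (at x within {0..1})"
    and cont: "continuous_on {0..1} f"
  shows "((\<lambda>x. x *\<^sub>R f' x) has_integral (f 1 - integral {0..1} f)) {0..1}"
proof -
  have "((\<lambda>x. x *\<^sub>R f' x + 1 *\<^sub>R f x) has_integral (1 *\<^sub>R f 1 - 0 *\<^sub>R f 0)) {0..1}"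
  proof (rule fundamental_theorem_of_calculus[where f = "\<lambda>x. x *\<^sub>R f x"])
    fix x :: real assume "x \<in> {0..1}"
    show "((\<lambda>x. x *\<^sub>R f x) has_vector_derivative x *\<^sub>R f' x + 1 *\<^sub>R f x) (at x within {0..1})"
      by (rule has_vector_derivative_scaleR[OF DERIV_ident deriv[OF \<open>x \<in> {0..1}\<close>]])
  qed simp
  moreover have "(f has_integral integral {0..1} f) {0..1}"
    by (intro integrable_integral integrable_continuous_interval cont)
  ultimately have "((\<lambda>x. (x *\<^sub>R f' x + 1 *\<^sub>R f x) - f x) has_integral
      (1 *\<^sub>R f 1 - 0 *\<^sub>R f 0 - integral {0..1} f)) {0..1}"
    by (rule has_integral_diff)
  thus ?thesis by simp
qed

definition fer_density :: "real \<Rightarrow> real" where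
  "fer_density x = (1 - exp (2 * x) * (1 - 2 * x)) / (2 * x)"

lemma fer_M_eq_integral: "fer_M K = integral {0..K} fer_density"
  unfolding fer_M_def fer_density_def by simp

text \<open>The singularity of the density at \<open>0\<close> is removable (with value \<open>0\<close>, which is
  also the value the division by zero produces).\<close>
lemma isCont_fer_density: "isCont fer_density x"
proof (cases "x = 0")
  case True
  define g where "g = (\<lambda>x::real. 1 - exp (2 * x) * (1 - 2 * x))"
  have "(g has_real_derivative - (exp (2 * 0) * 2 * (1 - 2 * 0) + exp (2 * 0) * (0 - 2 * 1))) (at 0)"
    unfolding g_def by (intro derivative_eq_intros) auto
  hence "((\<lambda>h. (g (0 + h) - g 0) / h) \<longlongrightarrow> 0) (at 0)" by (simp add: DERIV_def)
  hence "((\<lambda>h. (g h / h) / 2) \<longlongrightarrow> 0 / 2) (at 0)" by (intro tendsto_divide) (auto simp: g_def)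
  moreover have "(\<lambda>h. (g h / h) / 2) = fer_density" by (auto simp: fer_density_def g_def fun_eq_iff)
  ultimately show ?thesis using True by (simp add: isCont_def fer_density_def)
next
  case False
  thus ?thesis unfolding fer_density_def by (intro continuous_intros) auto
qed

lemma continuous_on_fer_density: "continuous_on S fer_density"
  by (simp add: continuous_at_imp_continuous_on isCont_fer_density)

lemma fer_density_nonneg: "0 \<le> x \<Longrightarrow> 0 \<le> fer_density x"
proof -
  assume x: "0 \<le> x"
  have "1 - 2 * x \<le> exp (- (2 * x))" using exp_ge_add_one_self[of "- (2 * x)"] by simp
  hence "exp (2 * x) * (1 - 2 * x) \<le> exp (2 * x) * exp (- (2 * x))" by (intro mult_left_mono) auto
  hence "exp (2 * x) * (1 - 2 * x) \<le> 1" by (simp add: exp_minus field_simps)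
  thus ?thesis using x unfolding fer_density_def by (intro divide_nonneg_nonneg) auto
qed

text \<open>Near \<open>0\<close> the density is small; this keeps fixed points of \<open>M\<close> away from \<open>0\<close>.\<close>
lemma fer_density_small: "0 \<le> x \<Longrightarrow> x \<le> 1/8 \<Longrightarrow> fer_density x \<le> 3/4"
proof -
  assume x: "0 \<le> x" "x \<le> 1/8"
  show ?thesis
  proof (cases "x = 0")
    case True thus ?thesis by (simp add: fer_density_def)
  next
    case False
    hence xp: "0 < x" using x by simp
    have e1: "1 + 2 * x \<le> exp (2 * x)" using exp_ge_add_one_self[of "2 * x"] by simp
    have "1 - 1/4 \<le> exp (- (1/4::real))" using exp_ge_add_one_self[of "- (1/4::real)"] by simp
    hence "exp (1/4::real) \<le> 4/3" by (simp add: exp_minus field_simps)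
    moreover have "exp (2 * x) \<le> exp (1/4)" using x by simp
    ultimately have e2: "exp (2 * x) \<le> 4/3" by linarith
    have "1 - exp (2 * x) * (1 - 2 * x) \<le> 2 * x * (exp (2 * x) - 1)"
      using e1 by (simp add: algebra_simps)
    also have "\<dots> \<le> 2 * x * (3/4)" using e2 xp by (intro mult_left_mono) auto
    finally show ?thesis using xp unfolding fer_density_def by (simp add: field_simps)
  qed
qed

lemma fer_density_has_integral:
  assumes K: "0 \<le> K"
  shows "((\<lambda>x. 2 * K * x * exp (2 * K * x)) has_integral fer_density K) {0..1}"
proof (cases "K = 0")
  case True
  thus ?thesis by (simp add: fer_density_def)
next
  case False
  hence Kp: "0 < K" using K by simp
  define G where "G = (\<lambda>x. x * exp (2 * K * x) - exp (2 * K * x) / (2 * K))"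
  have "((\<lambda>x. 2 * K * x * exp (2 * K * x)) has_integral (G 1 - G 0)) {0..1}"
  proof (rule fundamental_theorem_of_calculus)
    fix x :: real assume "x \<in> {0..1}"
    have "(G has_real_derivative (1 * exp (2 * K * x) + x * (exp (2 * K * x) * (2 * K * 1))
        - exp (2 * K * x) * (2 * K * 1) / (2 * K))) (at x within {0..1})"
      unfolding G_def using Kp by (intro derivative_eq_intros) auto
    moreover have "1 * exp (2 * K * x) + x * (exp (2 * K * x) * (2 * K * 1))
        - exp (2 * K * x) * (2 * K * 1) / (2 * K) = 2 * K * x * exp (2 * K * x)"
      using Kp by (simp add: field_simps)
    ultimately have "(G has_real_derivative 2 * K * x * exp (2 * K * x)) (at x within {0..1})"
      by metis
    thus "(G has_vector_derivative 2 * K * x * exp (2 * K * x)) (at x within {0..1})"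
      by (simp only: has_real_derivative_iff_has_vector_derivative)
  qed simp
  moreover have "G 1 - G 0 = fer_density K"
    using Kp by (simp add: G_def fer_density_def field_simps)
  ultimately show ?thesis by simp
qed

lemma fer_M_0 [simp]: "fer_M 0 = 0"
  by (simp add: fer_M_eq_integral)

lemma fer_M_nonneg: "0 \<le> fer_M K"
proof (cases "0 \<le> K")
  case True
  thus ?thesis unfolding fer_M_eq_integral
    by (intro integral_nonneg integrable_continuous_interval continuous_on_fer_density
        fer_density_nonneg) auto
qed (simp add: fer_M_eq_integral)

lemma fer_M_mono: "0 \<le> a \<Longrightarrow> a \<le> b \<Longrightarrow> fer_M a \<le> fer_M b"
proof -
  assume ab: "0 \<le> a" "a \<le> b"
  have "fer_M b = fer_M a + integral {a..b} fer_density"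
    unfolding fer_M_eq_integral
    using Henstock_Kurzweil_Integration.integral_combine[OF ab
        integrable_continuous_interval[OF continuous_on_fer_density]] by simp
  moreover have "0 \<le> integral {a..b} fer_density"
    using ab by (intro integral_nonneg integrable_continuous_interval continuous_on_fer_density
        fer_density_nonneg) auto
  ultimately show ?thesis by simp
qed

lemma fer_M_small: "0 \<le> K \<Longrightarrow> K \<le> 1/8 \<Longrightarrow> fer_M K \<le> 3/4 * K"
proof -
  assume K: "0 \<le> K" "K \<le> 1/8"
  have "fer_M K \<le> integral {0..K} (\<lambda>x. 3/4 :: real)"
    unfolding fer_M_eq_integral using K
    by (intro integral_le integrable_continuous_interval continuous_on_fer_density
        fer_density_small continuous_on_const) auto
  thus ?thesis using K by simp
qed

lemma continuous_on_fer_M: "continuous_on {0..b} fer_M"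
  unfolding fer_M_eq_integral
  by (intro indefinite_integral_continuous_1 integrable_continuous_interval continuous_on_fer_density)

lemma fer_M_has_vector_derivative:
  "y \<in> {0..b} \<Longrightarrow> (fer_M has_vector_derivative fer_density y) (at y within {0..b})"
  unfolding fer_M_eq_integral[abs_def]
  by (intro integral_has_vector_derivative continuous_on_fer_density)

lemma fer_M_substitution:
  fixes g :: "real \<Rightarrow> real"
  assumes t: "0 \<le> t" and g: "continuous_on {0..t} g" and g0: "\<And>s. s \<in> {0..t} \<Longrightarrow> 0 \<le> g s"
  shows "integral {0..t} (\<lambda>s. g s * fer_density (integral {0..s} g)) = fer_M (integral {0..t} g)"
proof -
  define k where "k = (\<lambda>s. integral {0..s} g)"
  have gi: "g integrable_on {0..t}" by (rule integrable_continuous_interval[OF g])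
  have k_range: "k s \<in> {0..k t}" if s: "s \<in> {0..t}" for s
  proof -
    have "k t = k s + integral {s..t} g"
      unfolding k_def using Henstock_Kurzweil_Integration.integral_combine[OF _ _ gi, of s] s by simp
    moreover have "0 \<le> integral {s..t} g" "0 \<le> k s"
      unfolding k_def using s g0
      by (auto intro!: integral_nonneg integrable_on_subinterval[OF gi])
    ultimately show ?thesis by simp
  qed
  have "((\<lambda>s. g s * fer_density (k s)) has_integral ((fer_M \<circ> k) t - (fer_M \<circ> k) 0)) {0..t}"
  proof (rule fundamental_theorem_of_calculus[OF t])
    fix s assume s: "s \<in> {0..t}"
    have dk: "(k has_vector_derivative g s) (at s within {0..t})"
      unfolding k_def by (rule integral_has_vector_derivative[OF g s])
    have "(fer_M has_vector_derivative fer_density (k s)) (at (k s) within {0..k t})"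
      by (rule fer_M_has_vector_derivative[OF k_range[OF s]])
    hence "(fer_M has_vector_derivative fer_density (k s)) (at (k s) within k ` {0..t})"
      by (rule has_vector_derivative_within_subset) (use k_range in auto)
    from vector_diff_chain_within[OF dk this]
    show "((fer_M \<circ> k) has_vector_derivative g s * fer_density (k s)) (at s within {0..t})"
      by simp
  qed
  thus ?thesis by (simp add: integral_unique k_def)
qed

lemma fer_xi_le: "0 < K \<Longrightarrow> fer_M K = K \<Longrightarrow> fer_xi \<le> K"
  unfolding fer_xi_def by (rule cInf_lower) (auto simp: bdd_below_def intro!: exI[of _ 0])

text \<open>On \<open>(0,\<xi>)\<close> the graph of \<open>M\<close> lies below the diagonal: \<open>M(K) < K\<close> holds near \<open>0\<close> by
  \<open>fer_M_small\<close>, and a failure further out would produce, by the intermediate value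
  theorem, a positive fixed point below \<open>\<xi>\<close>.\<close>
lemma fer_M_less: assumes "0 < K" "K < fer_xi" shows "fer_M K < K"
proof (rule ccontr)
  assume "\<not> fer_M K < K"
  hence ge: "K \<le> fer_M K" by simp
  show False
  proof (cases "K \<le> 1/8")
    case True
    thus False using fer_M_small[of K] assms ge by simp
  next
    case False
    have "continuous_on {1/8..K} (\<lambda>x. fer_M x - x)"
      by (intro continuous_on_diff continuous_on_id continuous_on_subset[OF continuous_on_fer_M[of K]])
        auto
    moreover have "fer_M (1/8) - 1/8 \<le> 0" using fer_M_small[of "1/8"] by simp
    moreover have "0 \<le> fer_M K - K" using ge by simp
    ultimately obtain x where x: "1/8 \<le> x" "x \<le> K" "fer_M x - x = 0"
      using IVT'[of "\<lambda>x. fer_M x - x" "1/8" 0 K] False by auto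
    hence "fer_xi \<le> x" using fer_xi_le[of x] by simp
    thus False using x assms by simp
  qed
qed

lemma fer_M_le_self: "0 \<le> K \<Longrightarrow> K < fer_xi \<Longrightarrow> fer_M K \<le> K"
  using fer_M_less[of K] by (cases "K = 0") auto

text \<open>The iterates of \<open>M\<close> started below \<open>\<xi>\<close> decrease to a fixed point, which must be \<open>0\<close>.\<close>
lemma fer_M_iterate_tendsto:
  assumes k: "0 \<le> k" "k < fer_xi"
  shows "(\<lambda>n. (fer_M ^^ n) k) \<longlonglongrightarrow> 0"
proof -
  define s where "s = (\<lambda>n. (fer_M ^^ n) k)"
  have s_Suc: "s (Suc n) = fer_M (s n)" for n by (simp add: s_def)
  have bounds: "0 \<le> s n \<and> s n \<le> k" for n
  proof (induction n)
    case (Suc n)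
    thus ?case using k fer_M_le_self[of "s n"] fer_M_nonneg[of "s n"] by (simp add: s_Suc)
  qed (use k in \<open>simp add: s_def\<close>)
  have "decseq s"
  proof (rule decseq_SucI)
    show "s (Suc n) \<le> s n" for n
      using bounds[of n] k fer_M_le_self[of "s n"] by (simp add: s_Suc)
  qed
  then obtain L where L: "s \<longlonglongrightarrow> L" "\<And>i. L \<le> s i"
    using decseq_convergent[of s 0] bounds by blast
  have L_range: "0 \<le> L" "L \<le> k"
    using LIMSEQ_le_const[OF L(1)] L(2)[of 0] bounds by (auto intro: order_trans)
  have "(\<lambda>n. fer_M (s n)) \<longlonglongrightarrow> fer_M L"
    using L_range bounds by (intro continuous_on_tendsto_compose[OF continuous_on_fer_M[of k] L(1)]) auto
  moreover have "(\<lambda>n. fer_M (s n)) \<longlonglongrightarrow> L"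
    using LIMSEQ_Suc[OF L(1)] by (simp add: s_Suc)
  ultimately have "fer_M L = L" using LIMSEQ_unique by blast
  hence "L = 0" using fer_M_less[of L] L_range k by fastforce
  thus ?thesis using L(1) by (simp add: s_def)
qed

definition fer_next :: "(real \<Rightarrow> 'm::finite cmat) \<Rightarrow> real \<Rightarrow> 'm cmat" where
  "fer_next X t = conj_flow (integral {0..t} X) (X t) 1
     - integral {0..1} (conj_flow (integral {0..t} X) (X t))"

lemma fer_A_Suc: "fer_A A (Suc n) = fer_next (fer_A A n)"
  by (simp add: fun_eq_iff fer_next_def conj_flow_def[abs_def] Let_def)

text \<open>The Fer step preserves continuity, so all iterates are continuous and every integral
  below exists; the inner integral over \<open>[0,1]\<close> is continuous in its parameter.\<close>
lemma continuous_on_fer_next: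
  assumes X: "continuous_on {0..T} X"
  shows "continuous_on {0..T} (fer_next X)"
proof -
  define F where "F = (\<lambda>t. integral {0..t} X)"
  have F: "continuous_on {0..T} F"
    unfolding F_def by (intro indefinite_integral_continuous_1 integrable_continuous_interval X)
  have "continuous_on ({0..T} \<times> cbox 0 1) (\<lambda>p. conj_flow (F (fst p)) (X (fst p)) (snd p))"
    by (intro continuous_intros continuous_on_compose2[OF F] continuous_on_compose2[OF X]) auto
  hence "continuous_on ({0..T} \<times> cbox 0 1) (\<lambda>(t, x). conj_flow (F t) (X t) x)"
    by (simp add: case_prod_beta)
  hence "continuous_on {0..T} (\<lambda>t. integral (cbox 0 1) (conj_flow (F t) (X t)))"
    by (rule integral_continuous_on_param)
  moreover have "fer_next X = (\<lambda>t. conj_flow (F t) (X t) 1 - integral (cbox 0 1) (conj_flow (F t) (X t)))"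
    by (simp add: fun_eq_iff fer_next_def F_def cbox_interval)
  ultimately show ?thesis by (simp only:) (intro continuous_intros F X)
qed

lemma continuous_on_fer_A:
  assumes "continuous_on {0..T} A"
  shows "continuous_on {0..T} (fer_A A n)"
proof (induction n)
  case (Suc n)
  thus ?case unfolding fer_A_Suc by (rule continuous_on_fer_next)
qed (simp add: assms)

locale submult_norm = vector_norm N for N :: "'m::finite cmat \<Rightarrow> real" +
  assumes mult: "N (X ** Y) \<le> N X * N Y"
begin

lemma commutator: "N (Z ** F - F ** Z) \<le> 2 * N F * N Z"
proof -
  have "N (Z ** F - F ** Z) \<le> N Z * N F + N F * N Z"
    using triangle_diff[of "Z ** F" "F ** Z"] mult[of Z F] mult[of F Z] by linarith
  thus ?thesis by (simp add: ac_simps)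
qed

text \<open>Since \<open>\<psi> = conj_flow F Y\<close> solves \<open>\<psi>' = \<psi>F - F\<psi>\<close>, Gronwall gives exponential growth
  at rate \<open>2 N(F)\<close> at most.\<close>
lemma conj_flow_bound:
  assumes x: "0 \<le> x"
  shows "N (conj_flow F Y x) \<le> N Y * exp (2 * N F * x)"
proof (rule gronwall[OF x])
  let ?\<psi> = "conj_flow F Y" and ?\<psi>' = "\<lambda>x. conj_flow F Y x ** F - F ** conj_flow F Y x"
  show "continuous_on {0..x} (\<lambda>s. N (?\<psi> s))"
    by (intro continuous_on_N_compose continuous_on_conj_flow_time)
  show "0 \<le> 2 * N F" by (simp add: nonneg)
  fix s assume s: "s \<in> {0..x}"
  have "(?\<psi>' has_integral (?\<psi> s - ?\<psi> 0)) {0..s}"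
    using s by (intro fundamental_theorem_of_calculus conj_flow_has_vector_derivative) auto
  hence "?\<psi> s - Y = integral {0..s} ?\<psi>'" by (simp add: integral_unique)
  hence "N (?\<psi> s - Y) \<le> integral {0..s} (\<lambda>r. N (?\<psi>' r))"
    by (simp only:)
      (intro integral_norm_le_continuous continuous_intros continuous_on_conj_flow_time)
  also have "\<dots> \<le> integral {0..s} (\<lambda>r. 2 * N F * N (?\<psi> r))"
    by (intro integral_le integrable_continuous_interval continuous_intros continuous_on_conj_flow_time
        commutator)
  finally show "N (?\<psi> s) \<le> N Y + 2 * N F * integral {0..s} (\<lambda>r. N (?\<psi> r))"
    using triangle[of Y "?\<psi> s - Y"] by simp
qed

text \<open>The key estimate of one Fer step: writing
  \<open>\<psi>(1) - \<integral>\<^sub>0\<^sup>1 \<psi> = \<integral>\<^sub>0\<^sup>1 x \<psi>'(x) dx\<close> and bounding \<open>\<psi>'\<close> by the commutator estimate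
  and \<open>conj_flow_bound\<close> yields the factor \<open>\<integral>\<^sub>0\<^sup>1 2Kx e\<^sup>2\<^sup>K\<^sup>x dx = fer_density K\<close>.\<close>
lemma fer_step_bound:
  assumes K: "N F \<le> K"
  shows "N (conj_flow F Y 1 - integral {0..1} (conj_flow F Y)) \<le> N Y * fer_density K"
proof -
  let ?\<psi> = "conj_flow F Y" and ?\<psi>' = "\<lambda>x. conj_flow F Y x ** F - F ** conj_flow F Y x"
  have K0: "0 \<le> K" using nonneg[of F] K by linarith
  have parts: "((\<lambda>x. x *\<^sub>R ?\<psi>' x) has_integral (?\<psi> 1 - integral {0..1} ?\<psi>)) {0..1}"
    by (intro has_integral_weighted_derivative conj_flow_has_vector_derivative
        continuous_on_conj_flow_time)
  have integrand: "N (x *\<^sub>R ?\<psi>' x) \<le> N Y * (2 * K * x * exp (2 * K * x))" if "x \<in> {0..1}" for x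
  proof -
    have x: "0 \<le> x" using that by simp
    have "N (x *\<^sub>R ?\<psi>' x) \<le> x * (2 * N F * N (?\<psi> x))"
      using x commutator by (simp add: homogeneous mult_left_mono)
    also have "\<dots> \<le> x * (2 * K * (N Y * exp (2 * K * x)))"
    proof (intro mult_left_mono mult_mono)
      have "exp (2 * N F * x) \<le> exp (2 * K * x)" using K x by (simp add: mult_right_mono)
      thus "N (?\<psi> x) \<le> N Y * exp (2 * K * x)"
        using conj_flow_bound[OF x] nonneg[of Y] by (meson mult_left_mono order_trans)
    qed (use K K0 x nonneg in auto)
    finally show ?thesis by (simp add: algebra_simps)
  qed
  have "?\<psi> 1 - integral {0..1} ?\<psi> = integral {0..1} (\<lambda>x. x *\<^sub>R ?\<psi>' x)"
    using parts by (simp add: integral_unique)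
  hence "N (?\<psi> 1 - integral {0..1} ?\<psi>) \<le> integral {0..1} (\<lambda>x. N (x *\<^sub>R ?\<psi>' x))"
    by (simp only:)
      (intro integral_norm_le_continuous continuous_intros continuous_on_conj_flow_time)
  also have "\<dots> \<le> integral {0..1} (\<lambda>x. N Y * (2 * K * x * exp (2 * K * x)))"
    by (intro integral_le integrable_continuous_interval continuous_intros
        continuous_on_conj_flow_time integrand)
  also have "\<dots> = N Y * fer_density K"
    by (rule integral_unique[OF has_integral_mult_right[OF fer_density_has_integral[OF K0]]])
  finally show ?thesis .
qed

text \<open>Pointwise, the step estimate applies with \<open>K = \<integral>\<^sub>0\<^sup>s N(X) \<ge> N(\<integral>\<^sub>0\<^sup>s X)\<close>.\<close>
lemma fer_next_pointwise:
  assumes X: "continuous_on {0..T} X" and s: "s \<in> {0..T}"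
  shows "N (fer_next X s) \<le> N (X s) * fer_density (integral {0..s} (\<lambda>r. N (X r)))"
proof -
  have "N (integral {0..s} X) \<le> integral {0..s} (\<lambda>r. N (X r))"
    using s by (intro integral_norm_le_continuous continuous_on_subset[OF X]) auto
  thus ?thesis unfolding fer_next_def by (rule fer_step_bound)
qed

lemma fer_next_integral_bound:
  assumes X: "continuous_on {0..T} X" and t: "t \<in> {0..T}"
  shows "integral {0..t} (\<lambda>s. N (fer_next X s)) \<le> fer_M (integral {0..t} (\<lambda>s. N (X s)))"
proof -
  have X_t: "continuous_on {0..t} X" using t by (intro continuous_on_subset[OF X]) auto
  have "integral {0..t} (\<lambda>s. N (fer_next X s))
      \<le> integral {0..t} (\<lambda>s. N (X s) * fer_density (integral {0..s} (\<lambda>r. N (X r))))"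
  proof (rule integral_le)
    show "(\<lambda>s. N (fer_next X s)) integrable_on {0..t}"
      by (intro integrable_continuous_interval continuous_on_N_compose
          continuous_on_fer_next X_t)
    show "(\<lambda>s. N (X s) * fer_density (integral {0..s} (\<lambda>r. N (X r)))) integrable_on {0..t}"
      by (intro integrable_continuous_interval continuous_on_mult continuous_on_N_compose X_t
          continuous_on_compose2[OF continuous_on_fer_density] indefinite_integral_continuous_1
          integrable_continuous_interval) auto
  qed (use fer_next_pointwise[OF X] t in auto)
  also have "\<dots> = fer_M (integral {0..t} (\<lambda>s. N (X s)))"
    using t by (intro fer_M_substitution continuous_on_N_compose X_t nonneg) auto
  finally show ?thesis .
qed

lemma mass_nonneg:
  fixes A :: "real \<Rightarrow> 'm cmat"
  assumes A: "continuous_on {0..T} A" and t: "t \<in> {0..T}"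
  shows "0 \<le> integral {0..t} (\<lambda>s. N (A s))"
proof -
  have "continuous_on {0..t} (\<lambda>s. N (A s))"
    using t by (intro continuous_on_N_compose continuous_on_subset[OF A]) auto
  thus ?thesis by (intro integral_nonneg integrable_continuous_interval nonneg)
qed

lemma fer_A_integral_bound:
  assumes A: "continuous_on {0..T} A" and t: "t \<in> {0..T}"
  shows "integral {0..t} (\<lambda>s. N (fer_A A n s)) \<le> (fer_M ^^ n) (integral {0..t} (\<lambda>s. N (A s)))"
proof (induction n)
  case (Suc n)
  have "fer_M (integral {0..t} (\<lambda>s. N (fer_A A n s)))
      \<le> fer_M ((fer_M ^^ n) (integral {0..t} (\<lambda>s. N (A s))))"
    by (rule fer_M_mono[OF mass_nonneg[OF continuous_on_fer_A[OF A] t] Suc.IH])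
  thus ?case
    using fer_next_integral_bound[OF continuous_on_fer_A[OF A] t, of n] unfolding fer_A_Suc by simp
qed simp

lemma fer_F_bound:
  assumes A: "continuous_on {0..T} A" and t: "t \<in> {0..T}"
  shows "N (fer_F A (Suc n) t) \<le> (fer_M ^^ n) (integral {0..t} (\<lambda>s. N (A s)))"
proof -
  have "N (fer_F A (Suc n) t) \<le> integral {0..t} (\<lambda>s. N (fer_A A n s))"
    using t by (simp only: fer_F.simps)
      (intro integral_norm_le_continuous continuous_on_subset[OF continuous_on_fer_A[OF A]], auto)
  also have "\<dots> \<le> (fer_M ^^ n) (integral {0..t} (\<lambda>s. N (A s)))"
    by (rule fer_A_integral_bound[OF A t])
  finally show ?thesis .
qed

text \<open>Convergence of the Fer expansion below the threshold \<open>\<xi>\<close>, using that \<open>N\<close> dominates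
  the Euclidean norm.\<close>
lemma fer_F_tendsto:
  assumes A: "continuous_on {0..T} A" and t: "t \<in> {0..T}"
    and small: "integral {0..t} (\<lambda>s. N (A s)) < fer_xi"
  shows "(\<lambda>n. fer_F A n t) \<longlonglongrightarrow> 0"
proof -
  let ?k = "integral {0..t} (\<lambda>s. N (A s))"
  have lim: "(\<lambda>n. (fer_M ^^ n) ?k) \<longlonglongrightarrow> 0"
    by (rule fer_M_iterate_tendsto[OF mass_nonneg[OF A t] small])
  obtain c where c: "c > 0" "\<And>x. c * norm x \<le> N x" using dominates_norm by blast
  have "c * norm (fer_F A (Suc n) t) \<le> (fer_M ^^ n) ?k" for n
    using c(2) fer_F_bound[OF A t] by (rule order_trans)
  hence "\<forall>\<^sub>F n in sequentially. norm (fer_F A (Suc n) t) \<le> (fer_M ^^ n) ?k / c"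
    using c(1) by (intro always_eventually allI) (simp add: pos_le_divide_eq mult.commute)
  moreover have "(\<lambda>n. (fer_M ^^ n) ?k / c) \<longlonglongrightarrow> 0"
    using tendsto_divide[OF lim tendsto_const, of c] c(1) by simp
  ultimately have "(\<lambda>n. fer_F A (Suc n) t) \<longlonglongrightarrow> 0"
    by (rule Lim_null_comparison)
  thus ?thesis by (rule LIMSEQ_imp_Suc)
qed

end

lemma submult_matrix_norm_imp_submult_norm:
  assumes "submult_matrix_norm N"
  shows "submult_norm N"
proof unfold_locales
  note N = assms[unfolded submult_matrix_norm_def]
  fix X Y :: "'a cmat" and r :: real
  show "N X = 0 \<longleftrightarrow> X = 0" using N by blast
  show "N (X + Y) \<le> N X + N Y" using N by blast
  show "N (X ** Y) \<le> N X * N Y" using N by blast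
  have "r *\<^sub>R X = mscale (complex_of_real r) X"
    by (simp add: mscale_def vec_eq_iff scaleR_conv_of_real[where 'a = complex])
  thus "N (r *\<^sub>R X) = \<bar>r\<bar> * N X" using N by simp
qed

theorem mainTheorem12:
  fixes A :: "real \<Rightarrow> 'm::finite cmat" and T :: real and N :: "'m cmat \<Rightarrow> real"
  assumes "continuous_on {0..T} A"
    and "submult_matrix_norm N"
  shows "(\<forall>n t. t \<in> {0..T} \<longrightarrow>
            integral {0..t} (\<lambda>s. N (fer_A A n s)) \<le> (fer_M ^^ n) (integral {0..t} (\<lambda>s. N (A s))))
       \<and> (\<forall>n t. t \<in> {0..T} \<longrightarrow>
            N (fer_F A (Suc n) t) \<le> (fer_M ^^ n) (integral {0..t} (\<lambda>s. N (A s))))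
       \<and> (\<forall>t. t \<in> {0..T} \<longrightarrow> integral {0..t} (\<lambda>s. N (A s)) < fer_xi \<longrightarrow>
            ((\<lambda>n. (fer_M ^^ n) (integral {0..t} (\<lambda>s. N (A s)))) \<longlonglongrightarrow> 0)
          \<and> ((\<lambda>n. fer_F A n t) \<longlonglongrightarrow> 0))"
proof -
  interpret submult_norm N
    using assms(2) by (rule submult_matrix_norm_imp_submult_norm)
  show ?thesis
    by (intro conjI allI impI fer_A_integral_bound[OF assms(1)] fer_F_bound[OF assms(1)]
        fer_M_iterate_tendsto mass_nonneg[OF assms(1)] fer_F_tendsto[OF assms(1)]) assumption+
qed

end
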